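(* Let $A=(a_{rs})$ be a complex $M\times N$ matrix, and let $m_1<m_2<\dots<m_M$ and $n_1<n_2<\dots<n_N$ be increasing finite sequences of natural numbers. Let $M_1\ge m_M$ and $N_1\ge n_N$, and let $B=(b_{jk})$ be the $M_1\times N_1$ matrix with $b_{jk}=a_{rs}$ when $j=m_r$ and $k=n_s$, and $b_{jk}=0$ otherwise. Then $h(A)=h(B)$.
   Context: Let $(\Omega,\Sigma,\mathbb P)$ be a probability space with a dyadic filtration $(\Sigma_k)_{k\ge0}$ (increasing sub-$\sigma$-algebras, each $\Sigma_k$ atomic with exactly $2^k$ atoms of probability $2^{-k}$); $\mathcal E_kf=\mathbb E(f\mid\Sigma_k)$, $\Delta_kf=\mathcal E_kf-\mathcal E_{k-1}f$ ($k\ge1$). For a complex $M\times N$ matrix $A=(a_{jk})$, $h(A)$ is the least constant such that $\big\|\max_{1\le j\le M}|\sum_{k=1}^N a_{jk}\Delta_kf|\big\|_{L_2}\le h(A)\|f\|_{L_2}$ for all $f\in L_2(\Omega)$; it does not depend on the choice of probability space and dyadic filtration. *)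

theory Defs
  imports "HOL-Probability.Probability"
begin

text \<open>The
  sigma-algebra Sigma_k is the one generated by P k (its atoms are exactly P k).\<close>
definition dyadic_filtration :: "'a measure \<Rightarrow> (nat \<Rightarrow> 'a set set) \<Rightarrow> bool" where
  "dyadic_filtration M P \<longleftrightarrow>
     (\<forall>k. P k \<subseteq> sets M \<and> finite (P k) \<and> card (P k) = 2 ^ k \<and> disjoint (P k)
          \<and> \<Union>(P k) = space M \<and> (\<forall>a\<in>P k. measure M a = 1 / 2 ^ k)
          \<and> (\<forall>a\<in>P (Suc k). \<exists>b\<in>P k. a \<subseteq> b))"

text \<open>Conditional expectation with respect to the atomic sigma-algebra generated by P k
  (the standard version: average of f over the atom containing x).\<close>
definition dyadic_cond_exp :: "'a measure \<Rightarrow> (nat \<Rightarrow> 'a set set) \<Rightarrow> nat \<Rightarrow> ('a \<Rightarrow> complex) \<Rightarrow> 'a \<Rightarrow> complex" where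
  "dyadic_cond_exp M P k f x =
     (\<Sum>a\<in>P k. indicator a x * ((LINT y:a|M. f y) / complex_of_real (measure M a)))"

definition dyadic_diff :: "'a measure \<Rightarrow> (nat \<Rightarrow> 'a set set) \<Rightarrow> nat \<Rightarrow> ('a \<Rightarrow> complex) \<Rightarrow> 'a \<Rightarrow> complex" where
  "dyadic_diff M P k f x = dyadic_cond_exp M P k f x - dyadic_cond_exp M P (k - 1) f x"

definition L2norm :: "'a measure \<Rightarrow> ('a \<Rightarrow> complex) \<Rightarrow> real" where
  "L2norm M g = sqrt (\<integral>x. (cmod (g x))\<^sup>2 \<partial>M)"

text \<open>h(A) for an m x n complex matrix A (entries A j k, 1 \<le> j \<le> m, 1 \<le> k \<le> n):
  the least constant c with || max_j |sum_k A j k Delta_k f| ||_2 \<le> c ||f||_2 for all f in L_2.\<close>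
definition hconst :: "'a measure \<Rightarrow> (nat \<Rightarrow> 'a set set) \<Rightarrow> nat \<Rightarrow> nat \<Rightarrow> (nat \<Rightarrow> nat \<Rightarrow> complex) \<Rightarrow> real" where
  "hconst M P m n A = Inf {c::real. 0 \<le> c \<and>
     (\<forall>f::'a \<Rightarrow> complex. f \<in> borel_measurable M \<and> integrable M (\<lambda>x. (cmod (f x))\<^sup>2) \<longrightarrow>
        L2norm M (\<lambda>x. MAX j\<in>{1..m}. cmod (\<Sum>k=1..n. A j k * dyadic_diff M P k f x))
          \<le> c * L2norm M f)}"

end

theory Submission
  imports Defs
begin

(*
  Write lam = c^2 and process the columns of A from left to right.  On an atom of the k-th
  partition the differences Delta_1 f, ..., Delta_k f are constant, so there the partial row sums
  of the first k columns form a fixed vector y.  Passing to the two halves of the atom,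
  Delta_(k+1) f takes the values t and -t, y moves to y + t v and y - t v (v the next column), and
  the variance of f on the atom accounts for |t|^2 more.  Hence the inequality
  E max_j |sum_k a_jk Delta_k f|^2 <= lam E |f|^2 holds for all f iff the value of the game
    W([], y) = max_j |y_j|^2,
    W(v # vs, y) = sup_t (W(vs, y + t v) + W(vs, y - t v)) / 2 - lam |t|^2
  at y = 0 is at most 0: going down the tree, W bounds the excess E_a(max^2) - lam Var_a f of
  every f on every atom a, and conversely near-optimal choices of t are realised by bounded
  functions glued together atom by atom.  So h(A) is determined by W, and W ignores zero columns,
  zero rows and the positions of the rows; B arises from A by exactly such padding.
*)

lemma cmod_add_power2: "(cmod (z + c))\<^sup>2 = (cmod z)\<^sup>2 + 2 * Re (cnj c * z) + (cmod c)\<^sup>2"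
  by (simp only: cmod_power2) (simp add: power2_eq_square algebra_simps)

lemma cmod_midpoint_power2:
  "(cmod ((z1 + z2) / 2))\<^sup>2 = ((cmod z1)\<^sup>2 + (cmod z2)\<^sup>2) / 2 - (cmod (z1 - (z1 + z2) / 2))\<^sup>2"
  by (simp only: cmod_power2) (simp add: power2_eq_square field_simps)

section \<open>Averages over sets\<close>

definition average :: "'a measure \<Rightarrow> 'a set \<Rightarrow> ('a \<Rightarrow> 'b::{banach, second_countable_topology, real_normed_field}) \<Rightarrow> 'b"
  where "average M a g = (LINT x:a|M. g x) / of_real (measure M a)"

context finite_measure
begin

lemma average_cong:
  assumes "\<And>x. x \<in> a \<Longrightarrow> f x = g x"
  shows "average M a f = average M a g"
proof -
  have "(\<lambda>x. indicator a x *\<^sub>R f x) = (\<lambda>x. indicator a x *\<^sub>R g x)"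
    using assms by (auto intro!: ext simp: indicator_def)
  then show ?thesis
    by (simp add: average_def set_lebesgue_integral_def)
qed

lemma average_const:
  assumes "a \<in> sets M" "measure M a \<noteq> 0"
  shows "average M a (\<lambda>_. c) = c"
  using assms by (simp add: average_def set_integral_const scaleR_conv_of_real)

lemma average_add:
  assumes "integrable M f" "integrable M g" "a \<in> sets M"
  shows "average M a (\<lambda>x. f x + g x) = average M a f + average M a g"
  using assms unfolding average_def
  by (simp add: set_integral_add set_integrable_def integrable_mult_indicator add_divide_distrib)

lemma average_mult_left: "average M a (\<lambda>x. c * f x) = c * average M a f"
  unfolding average_def by (simp add: set_integral_mult_right)

lemma average_Re:
  assumes "integrable M f" "a \<in> sets M"
  shows "average M a (\<lambda>x. Re (f x)) = Re (average M a f)"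
proof -
  have "(\<integral>x. indicator a x *\<^sub>R Re (f x) \<partial>M) = Re (\<integral>x. indicator a x *\<^sub>R f x \<partial>M)"
    using integral_Re[OF integrable_mult_indicator[OF assms(2,1)]] by simp
  then show ?thesis
    by (simp add: average_def set_lebesgue_integral_def Re_divide_of_real)
qed

lemma average_nonneg: "(\<And>x. 0 \<le> g x) \<Longrightarrow> 0 \<le> average M a (g :: 'a \<Rightarrow> real)"
  unfolding average_def set_lebesgue_integral_def
  by (intro divide_nonneg_nonneg integral_nonneg_AE) auto

lemma average_split_half:
  assumes "a = a1 \<union> a2" "a1 \<inter> a2 = {}" "a1 \<in> sets M" "a2 \<in> sets M"
    and "measure M a1 = measure M a / 2" "measure M a2 = measure M a / 2" "measure M a \<noteq> 0"
    and "integrable M g"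
  shows "average M a g = (average M a1 g + average M a2 g) / 2"
proof -
  have "(LINT x:a|M. g x) = (LINT x:a1|M. g x) + (LINT x:a2|M. g x)"
    unfolding assms(1) using assms(2-4,8)
    by (intro set_integral_Un) (auto simp: set_integrable_def integrable_mult_indicator)
  then show ?thesis
    using assms(7) unfolding average_def assms(5,6) of_real_divide by (simp add: field_simps)
qed

lemma average_norm_sq_add_const:
  fixes f :: "'a \<Rightarrow> complex"
  assumes "integrable M f" "integrable M (\<lambda>x. (cmod (f x))\<^sup>2)" "a \<in> sets M" "measure M a \<noteq> 0"
  shows "average M a (\<lambda>x. (cmod (f x + c))\<^sup>2)
    = average M a (\<lambda>x. (cmod (f x))\<^sup>2) + 2 * Re (cnj c * average M a f) + (cmod c)\<^sup>2"
proof -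
  have "average M a (\<lambda>x. (cmod (f x + c))\<^sup>2)
      = average M a (\<lambda>x. ((cmod (f x))\<^sup>2 + 2 * Re (cnj c * f x)) + (cmod c)\<^sup>2)"
    by (intro average_cong) (simp add: cmod_add_power2)
  also have "\<dots> = average M a (\<lambda>x. (cmod (f x))\<^sup>2 + 2 * Re (cnj c * f x)) + (cmod c)\<^sup>2"
    using average_add[OF _ _ assms(3), of "\<lambda>x. (cmod (f x))\<^sup>2 + 2 * Re (cnj c * f x)" "\<lambda>_. (cmod c)\<^sup>2"]
      average_const[OF assms(3,4)] assms(1,2) by simp
  also have "average M a (\<lambda>x. (cmod (f x))\<^sup>2 + 2 * Re (cnj c * f x))
      = average M a (\<lambda>x. (cmod (f x))\<^sup>2) + 2 * average M a (\<lambda>x. Re (cnj c * f x))"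
    using average_add[OF _ _ assms(3), of "\<lambda>x. (cmod (f x))\<^sup>2" "\<lambda>x. 2 * Re (cnj c * f x)"]
      average_mult_left[of a 2 "\<lambda>x. Re (cnj c * f x)"] assms(1,2) by simp
  also have "average M a (\<lambda>x. Re (cnj c * f x)) = Re (cnj c * average M a f)"
    using average_Re[of "\<lambda>x. cnj c * f x" a] average_mult_left[of a "cnj c" f] assms(1,3)
    by simp
  finally show ?thesis .
qed

lemma norm_average_sq_le:
  fixes f :: "'a \<Rightarrow> complex"
  assumes "integrable M f" "integrable M (\<lambda>x. (cmod (f x))\<^sup>2)" "a \<in> sets M" "measure M a \<noteq> 0"
  shows "(cmod (average M a f))\<^sup>2 \<le> average M a (\<lambda>x. (cmod (f x))\<^sup>2)"
proof -
  define m where "m = average M a f"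
  have "Re (cnj m * m) = (cmod m)\<^sup>2"
    using cmod_power2[of m] by (simp add: power2_eq_square)
  moreover have "0 \<le> average M a (\<lambda>x. (cmod (f x + - m))\<^sup>2)"
    by (rule average_nonneg) simp
  ultimately show ?thesis
    using average_norm_sq_add_const[OF assms, of "- m"] unfolding m_def by simp
qed

end

lemma (in prob_space) average_space: "integrable M g \<Longrightarrow> average M (space M) g = expectation g"
  by (simp add: average_def set_integral_space prob_space)

definition square_integrable :: "'a measure \<Rightarrow> ('a \<Rightarrow> complex) \<Rightarrow> bool"
  where "square_integrable M f \<longleftrightarrow> f \<in> borel_measurable M \<and> integrable M (\<lambda>x. (cmod (f x))\<^sup>2)"

lemma (in finite_measure) square_integrableD:
  assumes "square_integrable M f"
  shows "integrable M f" "integrable M (\<lambda>x. (cmod (f x))\<^sup>2)"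
proof -
  have [measurable]: "f \<in> borel_measurable M" and "integrable M (\<lambda>x. norm (f x ^ 2))"
    using assms by (simp_all add: square_integrable_def norm_power)
  then have "integrable M (\<lambda>x. f x ^ 2)"
    by (subst integrable_norm_iff[symmetric]) simp_all
  then show "integrable M f"
    by (rule square_integrable_imp_integrable[rotated]) simp
  show "integrable M (\<lambda>x. (cmod (f x))\<^sup>2)"
    using assms by (simp add: square_integrable_def)
qed

lemma (in finite_measure) square_integrable_if_bounded:
  assumes "f \<in> borel_measurable M" "\<And>x. cmod (f x) \<le> K"
  shows "square_integrable M f"
  unfolding square_integrable_def
proof
  show "integrable M (\<lambda>x. (cmod (f x))\<^sup>2)"
    using assms by (intro integrable_const_bound[where B="K\<^sup>2"]) (auto intro!: AE_I2 power_mono)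
qed fact

section \<open>A Bellman function for the columns of a matrix\<close>

fun bellman :: "nat \<Rightarrow> real \<Rightarrow> (nat \<Rightarrow> complex) list \<Rightarrow> (nat \<Rightarrow> complex) \<Rightarrow> ereal" where
  "bellman R lam [] y = ereal ((MAX j\<in>{1..R}. cmod (y j))\<^sup>2)"
| "bellman R lam (v # vs) y =
     (SUP c. (bellman R lam vs (\<lambda>j. y j + c * v j) + bellman R lam vs (\<lambda>j. y j - c * v j)) / 2
             - ereal (lam * (cmod c)\<^sup>2))"

lemma bellman_nonneg: "0 \<le> bellman R lam vs y"
proof (induction vs arbitrary: y)
  case (Cons v vs)
  have "0 \<le> (bellman R lam vs y + bellman R lam vs y) / 2 - ereal (lam * (cmod 0)\<^sup>2)"
    using Cons.IH[of y] by (cases "bellman R lam vs y") auto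
  also have "\<dots> \<le> bellman R lam (v # vs) y"
    unfolding bellman.simps by (rule SUP_upper2[where i=0]) simp_all
  finally show ?case .
qed simp

lemma bellman_cong: "(\<And>j. j \<in> {1..R} \<Longrightarrow> y j = y' j) \<Longrightarrow> bellman R lam vs y = bellman R lam vs y'"
proof (induction vs arbitrary: y y')
  case Nil
  then have "(\<lambda>j. cmod (y j)) ` {1..R} = (\<lambda>j. cmod (y' j)) ` {1..R}"
    by auto
  then show ?case by simp
next
  case (Cons v vs)
  have "bellman R lam vs (\<lambda>j. y j + c * v j) = bellman R lam vs (\<lambda>j. y' j + c * v j)"
    "bellman R lam vs (\<lambda>j. y j - c * v j) = bellman R lam vs (\<lambda>j. y' j - c * v j)" for c
    by (rule Cons.IH; simp add: Cons.prems)+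
  then show ?case by simp
qed

lemma bellman_Cons_zero:
  assumes "\<And>j. j \<in> {1..R} \<Longrightarrow> v j = 0" "0 \<le> lam"
  shows "bellman R lam (v # vs) y = bellman R lam vs y"
proof -
  let ?w = "bellman R lam vs y"
  have "bellman R lam vs (\<lambda>j. y j + c * v j) = ?w" "bellman R lam vs (\<lambda>j. y j - c * v j) = ?w" for c
    using assms(1) by (auto intro: bellman_cong)
  moreover have "(?w + ?w) / 2 = ?w"
    by (cases ?w) simp_all
  ultimately have "bellman R lam (v # vs) y = (SUP c. ?w - ereal (lam * (cmod c)\<^sup>2))"
    by simp
  also have "\<dots> = ?w"
  proof (rule antisym)
    show "(SUP c. ?w - ereal (lam * (cmod c)\<^sup>2)) \<le> ?w"
      using assms(2) by (intro SUP_least) (cases ?w; simp)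
    show "?w \<le> (SUP c. ?w - ereal (lam * (cmod c)\<^sup>2))"
      by (rule SUP_upper2[where i=0]) simp_all
  qed
  finally show ?thesis .
qed

lemma bellman_filter:
  assumes "0 \<le> lam" "\<And>v. \<not> Q v \<Longrightarrow> \<forall>j\<in>{1..R}. v j = 0"
  shows "bellman R lam (filter Q vs) y = bellman R lam vs y"
proof (induction vs arbitrary: y)
  case (Cons v vs)
  show ?case
  proof (cases "Q v")
    case True
    then show ?thesis by (simp add: Cons.IH)
  next
    case False
    then show ?thesis
      using bellman_Cons_zero[OF _ assms(1), of R v vs y] assms(2)
      by (simp add: Cons.IH del: bellman.simps(2))
  qed
qed simp

definition spread :: "nat \<Rightarrow> (nat \<Rightarrow> nat) \<Rightarrow> (nat \<Rightarrow> complex) \<Rightarrow> nat \<Rightarrow> complex" where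
  "spread R ms v j = (if j \<in> ms ` {1..R} then v (the_inv_into {1..R} ms j) else 0)"

lemma spread_apply: "inj_on ms {1..R} \<Longrightarrow> r \<in> {1..R} \<Longrightarrow> spread R ms v (ms r) = v r"
  by (simp add: spread_def the_inv_into_f_f)

lemma Max_norm_spread:
  assumes "inj_on ms {1..R}" "ms ` {1..R} \<subseteq> {1..R'}" "1 \<le> R"
  shows "(MAX j\<in>{1..R'}. cmod (spread R ms y j)) = (MAX r\<in>{1..R}. cmod (y r))"
proof (rule antisym)
  let ?S = "(\<lambda>r. cmod (y r)) ` {1..R}"
  have "?S \<noteq> {}" "0 \<le> Max ?S" "{1..R'} \<noteq> {}"
    using assms(2,3) by (fastforce simp: Max_ge_iff)+
  have "cmod (spread R ms y j) \<in> insert 0 ?S" for j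
  proof (cases "j \<in> ms ` {1..R}")
    case True
    then obtain r where "r \<in> {1..R}" "j = ms r" by blast
    then show ?thesis by (simp add: spread_apply[OF assms(1)])
  qed (simp add: spread_def)
  then have "(\<lambda>j. cmod (spread R ms y j)) ` {1..R'} \<subseteq> insert 0 ?S"
    by blast
  then have "(MAX j\<in>{1..R'}. cmod (spread R ms y j)) \<le> Max (insert 0 ?S)"
    using \<open>{1..R'} \<noteq> {}\<close> by (intro Max_mono) auto
  also have "\<dots> = Max ?S"
    using \<open>?S \<noteq> {}\<close> \<open>0 \<le> Max ?S\<close> by (simp add: max_def)
  finally show "(MAX j\<in>{1..R'}. cmod (spread R ms y j)) \<le> Max ?S" .
  have "cmod (y r) \<in> (\<lambda>j. cmod (spread R ms y j)) ` {1..R'}" if "r \<in> {1..R}" for r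
    using that assms(2) spread_apply[OF assms(1) that, of y] by (metis image_eqI image_subset_iff)
  then have "?S \<subseteq> (\<lambda>j. cmod (spread R ms y j)) ` {1..R'}"
    by blast
  then show "Max ?S \<le> (MAX j\<in>{1..R'}. cmod (spread R ms y j))"
    using \<open>?S \<noteq> {}\<close> \<open>{1..R'} \<noteq> {}\<close> by (intro Max_mono) auto
qed

lemma spread_zero: "spread R ms (\<lambda>_. 0) = (\<lambda>_. 0)"
  by (simp add: spread_def fun_eq_iff)

lemma bellman_spread:
  assumes "inj_on ms {1..R}" "ms ` {1..R} \<subseteq> {1..R'}" "1 \<le> R"
  shows "bellman R' lam (map (spread R ms) vs) (spread R ms y) = bellman R lam vs y"
proof (induction vs arbitrary: y)
  case Nil
  then show ?case using Max_norm_spread[OF assms] by simp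
next
  case (Cons v vs)
  have "(\<lambda>j. spread R ms y j + c * spread R ms v j) = spread R ms (\<lambda>j. y j + c * v j)"
    "(\<lambda>j. spread R ms y j - c * spread R ms v j) = spread R ms (\<lambda>j. y j - c * v j)" for c
    by (auto simp: spread_def)
  then show ?case using Cons.IH by simp
qed

definition column_list :: "(nat \<Rightarrow> nat \<Rightarrow> complex) \<Rightarrow> nat \<Rightarrow> nat \<Rightarrow> (nat \<Rightarrow> complex) list" where
  "column_list X k L = map (\<lambda>s j. X j s) [Suc k..<Suc L]"

lemma column_list_Cons: "k < L \<Longrightarrow> column_list X k L = (\<lambda>j. X j (Suc k)) # column_list X (Suc k) L"
  by (simp add: column_list_def upt_conv_Cons del: upt_Suc)

lemma column_list_Nil: "column_list X L L = []"
  by (simp add: column_list_def)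

lemma filter_upt_eq_filter_map_strict_mono:
  assumes "strict_mono_on {1..N} ns" "ns ` {1..N} \<subseteq> {1..N'}"
    and "\<And>k. k \<in> {1..N'} \<Longrightarrow> Q k \<Longrightarrow> k \<in> ns ` {1..N}"
  shows "filter Q [1..<Suc N'] = filter Q (map ns [1..<Suc N])"
proof (rule sorted_distinct_set_unique)
  have "sorted_wrt (<) (map ns [1..<Suc N])"
    unfolding sorted_wrt_map
    by (rule sorted_wrt_mono_rel[OF _ sorted_wrt_upt]) (use strict_mono_onD[OF assms(1)] in auto)
  then show "sorted (filter Q (map ns [1..<Suc N]))" "distinct (filter Q (map ns [1..<Suc N]))"
    using sorted_wrt_filter strict_sorted_iff by blast+
  show "sorted (filter Q [1..<Suc N'])" "distinct (filter Q [1..<Suc N'])"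
    using sorted_wrt_filter[OF sorted_wrt_upt] strict_sorted_iff by blast+
  show "set (filter Q [1..<Suc N']) = set (filter Q (map ns [1..<Suc N]))"
    unfolding set_filter set_map set_upt atLeastLessThanSuc_atLeastAtMost using assms(2,3) by auto
qed

lemma bellman_column_list_spread:
  assumes "1 \<le> R" "inj_on ms {1..R}" "ms ` {1..R} \<subseteq> {1..R'}"
    and "strict_mono_on {1..L} ns" "ns ` {1..L} \<subseteq> {1..L'}"
    and "\<forall>r\<in>{1..R}. \<forall>s\<in>{1..L}. Y (ms r) (ns s) = X r s"
    and "\<forall>j k. j \<notin> ms ` {1..R} \<or> k \<notin> ns ` {1..L} \<longrightarrow> Y j k = 0"
    and "0 \<le> lam"
  shows "bellman R' lam (column_list Y 0 L') (\<lambda>_. 0) = bellman R lam (column_list X 0 L) (\<lambda>_. 0)"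
proof -
  define col where "col k = (\<lambda>j. Y j k)" for k
  define nz where "nz v \<longleftrightarrow> (\<exists>j\<in>{1..R'}. v j \<noteq> 0)" for v :: "nat \<Rightarrow> complex"
  have col_ns: "col (ns s) = spread R ms (\<lambda>j. X j s)" if "s \<in> {1..L}" for s
  proof
    fix j
    show "col (ns s) j = spread R ms (\<lambda>j. X j s) j"
    proof (cases "j \<in> ms ` {1..R}")
      case True
      then obtain r where "r \<in> {1..R}" "j = ms r" by blast
      then show ?thesis
        using assms(6) that spread_apply[OF assms(2)] by (simp add: col_def)
    qed (use assms(7) in \<open>simp add: col_def spread_def\<close>)
  qed
  have drop_zero: "bellman R' lam (filter nz vs) (\<lambda>_. 0) = bellman R' lam vs (\<lambda>_. 0)" for vs
    by (rule bellman_filter[OF assms(8)]) (simp add: nz_def)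
  have nz_col: "k \<in> ns ` {1..L}" if "k \<in> {1..L'}" "nz (col k)" for k
    using that assms(7) by (auto simp: nz_def col_def)
  have "column_list Y 0 L' = map col [1..<Suc L']"
    by (simp add: column_list_def col_def del: upt_Suc)
  then have "bellman R' lam (column_list Y 0 L') (\<lambda>_. 0) = bellman R' lam (filter nz (map col [1..<Suc L'])) (\<lambda>_. 0)"
    by (simp only: drop_zero)
  also have "filter nz (map col [1..<Suc L']) = map col (filter (nz \<circ> col) [1..<Suc L'])"
    by (rule filter_map)
  also have "filter (nz \<circ> col) [1..<Suc L'] = filter (nz \<circ> col) (map ns [1..<Suc L])"
    using nz_col by (intro filter_upt_eq_filter_map_strict_mono[OF assms(4,5)]) simp
  also have "map col (filter (nz \<circ> col) (map ns [1..<Suc L])) = filter nz (map col (map ns [1..<Suc L]))"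
    by (rule filter_map[symmetric])
  also have "bellman R' lam \<dots> (\<lambda>_. 0) = bellman R' lam (map col (map ns [1..<Suc L])) (\<lambda>_. 0)"
    by (rule drop_zero)
  also have "map col (map ns [1..<Suc L]) = map (spread R ms) (column_list X 0 L)"
    using col_ns by (simp add: column_list_def del: upt_Suc)
  also have "bellman R' lam (map (spread R ms) (column_list X 0 L)) (\<lambda>_. 0)
      = bellman R lam (column_list X 0 L) (\<lambda>_. 0)"
    using bellman_spread[OF assms(2,3,1), of lam _ "\<lambda>_. 0"] by (simp add: spread_zero)
  finally show ?thesis .
qed

section \<open>Dyadic filtrations\<close>

locale dyadic_prob_space = prob_space M for M :: "'a measure" +
  fixes P :: "nat \<Rightarrow> 'a set set"
  assumes dyadic_filtration: "dyadic_filtration M P"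
begin

lemma atom_sets: "a \<in> P k \<Longrightarrow> a \<in> sets M"
  and measure_atom: "a \<in> P k \<Longrightarrow> measure M a = 1 / 2 ^ k"
  and finite_atoms: "finite (P k)"
  and card_atoms: "card (P k) = 2 ^ k"
  and Union_atoms: "\<Union>(P k) = space M"
  and disjoint_atoms: "disjoint (P k)"
  and atom_refines: "a \<in> P (Suc k) \<Longrightarrow> \<exists>b\<in>P k. a \<subseteq> b"
  using dyadic_filtration unfolding dyadic_filtration_def by blast+

lemma measure_atom_neq_0: "a \<in> P k \<Longrightarrow> measure M a \<noteq> 0"
  by (simp add: measure_atom)

lemma atom_eq: "a \<in> P k \<Longrightarrow> b \<in> P k \<Longrightarrow> x \<in> a \<Longrightarrow> x \<in> b \<Longrightarrow> a = b"
  using disjoint_atoms[of k] unfolding disjoint_def by blast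

lemma atoms_0: "P 0 = {space M}"
proof -
  have "card (P 0) = 1"
    by (simp add: card_atoms)
  then obtain a where "P 0 = {a}"
    by (rule card_1_singletonE)
  then show ?thesis
    using Union_atoms[of 0] by simp
qed

lemma finer_atom_subset:
  assumes "k \<le> l" "a \<in> P k" "b \<in> P l" "x \<in> a" "x \<in> b"
  shows "b \<subseteq> a"
  using assms(1,3,5)
proof (induction l arbitrary: b rule: dec_induct)
  case base
  then show ?case using assms(2,4) atom_eq by blast
next
  case (step l)
  obtain b' where "b' \<in> P l" "b \<subseteq> b'"
    using atom_refines step.prems(1) by blast
  then show ?case using step.IH step.prems(2) by blast
qed

lemma atom_split:
  assumes "a \<in> P k"
  obtains a1 a2 where "a1 \<in> P (Suc k)" "a2 \<in> P (Suc k)" "a1 \<inter> a2 = {}" "a1 \<union> a2 = a"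
proof -
  define C where "C = {b \<in> P (Suc k). b \<subseteq> a}"
  have "\<Union>C = a"
  proof
    show "a \<subseteq> \<Union>C"
    proof
      fix x assume "x \<in> a"
      then obtain b where b: "b \<in> P (Suc k)" "x \<in> b"
        using assms Union_atoms by blast
      then have "b \<subseteq> a"
        using finer_atom_subset[of k "Suc k" a b x] assms \<open>x \<in> a\<close> by simp
      with b show "x \<in> \<Union>C"
        unfolding C_def by blast
    qed
  qed (auto simp: C_def)
  have "finite C"
    using finite_atoms by (simp add: C_def)
  have "1 / 2 ^ k = measure M (\<Union>b\<in>C. b)"
    using measure_atom[OF assms] \<open>\<Union>C = a\<close> by simp
  also have "\<dots> = (\<Sum>b\<in>C. measure M b)"
  proof (rule measure_finite_Union[OF \<open>finite C\<close>])
    show "disjoint_family_on (\<lambda>b. b) C"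
      unfolding disjoint_family_on_def C_def using atom_eq by blast
  qed (auto simp: C_def atom_sets)
  also have "\<dots> = (\<Sum>b\<in>C. 1 / 2 ^ Suc k)"
    by (rule sum.cong) (auto simp: C_def measure_atom)
  finally have "card C = 2"
    by (simp add: field_simps)
  then obtain a1 a2 where C: "C = {a1, a2}" "a1 \<noteq> a2"
    by (auto simp: card_2_iff)
  then have a12: "a1 \<in> P (Suc k)" "a2 \<in> P (Suc k)"
    by (auto simp: C_def)
  have "a1 \<inter> a2 = {}"
    using atom_eq[OF a12] C(2) by blast
  moreover have "a1 \<union> a2 = a"
    using \<open>\<Union>C = a\<close> C(1) by simp
  ultimately show ?thesis
    using that a12 by blast
qed

lemma dyadic_cond_exp_atom:
  assumes "a \<in> P k" "x \<in> a"
  shows "dyadic_cond_exp M P k f x = average M a f"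
proof -
  have "dyadic_cond_exp M P k f x = (\<Sum>b\<in>P k. indicator b x * average M b f)"
    by (simp add: dyadic_cond_exp_def average_def)
  also have "\<dots> = average M a f"
  proof -
    have "indicator b x = (0::complex)" if "b \<in> P k - {a}" for b
      using that assms atom_eq by (auto simp: indicator_def)
    then show ?thesis
      using assms by (simp add: sum.remove[OF finite_atoms assms(1)] sum.neutral)
  qed
  finally show ?thesis .
qed

lemma dyadic_diff_child:
  assumes "a \<in> P k" "b \<in> P (Suc k)" "b \<subseteq> a" "x \<in> b"
  shows "dyadic_diff M P (Suc k) f x = average M b f - average M a f"
proof -
  have "x \<in> a"
    using assms(3,4) by blast
  then show ?thesis
    using dyadic_cond_exp_atom[OF assms(2,4)] dyadic_cond_exp_atom[OF assms(1)]
    by (simp add: dyadic_diff_def)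
qed

lemma dyadic_cond_exp_add_const:
  assumes "integrable M f" "b \<in> P k" "\<And>x. x \<in> b \<Longrightarrow> g x = f x + c" "k \<le> l" "x \<in> b"
  shows "dyadic_cond_exp M P l g x = dyadic_cond_exp M P l f x + c"
proof -
  obtain e where e: "e \<in> P l" "x \<in> e"
    using assms(2,5) Union_atoms by blast
  then have "e \<subseteq> b"
    using finer_atom_subset assms by blast
  then have "average M e g = average M e (\<lambda>x. f x + c)"
    using assms(3) by (intro average_cong) auto
  also have "\<dots> = average M e f + c"
    using assms(1) atom_sets[OF e(1)] measure_atom_neq_0[OF e(1)] by (simp add: average_add average_const)
  finally show ?thesis
    using dyadic_cond_exp_atom[OF e] by simp
qed

lemma borel_measurable_dyadic_diff [measurable]: "dyadic_diff M P k f \<in> borel_measurable M"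
proof -
  have "dyadic_cond_exp M P k f \<in> borel_measurable M" for k
    unfolding dyadic_cond_exp_def[abs_def] using atom_sets by measurable
  then show ?thesis
    unfolding dyadic_diff_def[abs_def] by measurable
qed

lemma dyadic_diff_bounded: "\<exists>K. \<forall>x. cmod (dyadic_diff M P k f x) \<le> K"
proof -
  define K where "K l = (\<Sum>a\<in>P l. cmod (average M a f))" for l
  have K: "cmod (dyadic_cond_exp M P l f x) \<le> K l" for l x
    unfolding dyadic_cond_exp_def average_def[symmetric] K_def
    by (rule order.trans[OF norm_sum sum_mono]) (simp add: indicator_def)
  have "cmod (dyadic_diff M P k f x) \<le> K k + K (k - 1)" for x
    unfolding dyadic_diff_def by (rule order.trans[OF norm_triangle_ineq4 add_mono[OF K K]])
  then show ?thesis
    by blast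
qed

end

section \<open>The Bellman function decides the maximal inequality\<close>

lemma ereal_half_sum_diff_mono:
  "ereal x1 \<le> w1 \<Longrightarrow> ereal x2 \<le> w2 \<Longrightarrow> ereal ((x1 + x2) / 2 - r) \<le> (w1 + w2) / 2 - ereal r"
  by (cases w1; cases w2) auto

lemma ereal_less_half_sum_diff:
  assumes "ereal t < (w1 + w2) / 2 - ereal r" "0 \<le> w1" "0 \<le> w2"
  obtains t1 t2 where "ereal t1 < w1" "ereal t2 < w2" "t < (t1 + t2) / 2 - r"
proof (cases w1)
  case PInf
  have "ereal (-1) < w2"
    by (rule order.strict_trans2[OF _ assms(3)]) simp
  then show thesis
    by (rule that[of "2 * (t + r) + 2" "-1", rotated]) (simp_all add: PInf field_simps)
next
  case (real a)
  have "ereal (2 * (t + r) - a) < w2"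
    using assms(1,3) real by (cases w2) (auto simp: field_simps)
  then obtain t2 where "ereal (2 * (t + r) - a) < ereal t2" "ereal t2 < w2"
    using ereal_dense2 by blast
  then have t2: "2 * (t + r) - a < t2" "ereal t2 < w2"
    by simp_all
  show thesis
    by (rule that[of "(a + 2 * (t + r) - t2) / 2" t2]) (use real t2 in \<open>auto simp: field_simps\<close>)
qed (use assms(2) in simp)

context dyadic_prob_space
begin

(* k is the level of the atom under consideration: the differences up to level k are constant
   on it and enter through the offsets y. *)
definition tail_max_sq ::
    "nat \<Rightarrow> nat \<Rightarrow> (nat \<Rightarrow> nat \<Rightarrow> complex) \<Rightarrow> nat \<Rightarrow> (nat \<Rightarrow> complex) \<Rightarrow> ('a \<Rightarrow> complex) \<Rightarrow> 'a \<Rightarrow> real"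
  where "tail_max_sq R L X k y f x =
    (MAX j\<in>{1..R}. cmod (y j + (\<Sum>s\<in>{Suc k..L}. X j s * dyadic_diff M P s f x)))\<^sup>2"

definition excess ::
    "nat \<Rightarrow> nat \<Rightarrow> (nat \<Rightarrow> nat \<Rightarrow> complex) \<Rightarrow> real \<Rightarrow> nat \<Rightarrow> 'a set \<Rightarrow> (nat \<Rightarrow> complex) \<Rightarrow> ('a \<Rightarrow> complex) \<Rightarrow> real"
  where "excess R L X lam k a y f = average M a (tail_max_sq R L X k y f)
    - lam * (average M a (\<lambda>x. (cmod (f x))\<^sup>2) - (cmod (average M a f))\<^sup>2)"

lemma tail_max_sq_Suc:
  assumes "k < L"
  shows "tail_max_sq R L X k y f x
    = tail_max_sq R L X (Suc k) (\<lambda>j. y j + dyadic_diff M P (Suc k) f x * X j (Suc k)) f x"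
proof -
  have "y j + (\<Sum>s\<in>{Suc k..L}. X j s * dyadic_diff M P s f x)
      = (y j + dyadic_diff M P (Suc k) f x * X j (Suc k)) + (\<Sum>s\<in>{Suc (Suc k)..L}. X j s * dyadic_diff M P s f x)"
    for j
    using assms by (simp add: sum.atLeast_Suc_atMost algebra_simps)
  then show ?thesis
    by (simp only: tail_max_sq_def)
qed

lemma tail_max_sq_self: "tail_max_sq R L X L y f = (\<lambda>_. (MAX j\<in>{1..R}. cmod (y j))\<^sup>2)"
  by (rule ext) (simp add: tail_max_sq_def)

lemma tail_max_sq_bounded: "\<exists>C. \<forall>x. tail_max_sq R L X k y f x \<le> C"
proof (cases "R = 0")
  case True
  then show ?thesis
    by (auto simp: tail_max_sq_def intro: exI[of _ "(Max {})\<^sup>2"])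
next
  case False
  have "\<forall>s. \<exists>K. \<forall>x. cmod (dyadic_diff M P s f x) \<le> K"
    using dyadic_diff_bounded by blast
  then obtain K where K: "\<And>s x. cmod (dyadic_diff M P s f x) \<le> K s"
    by metis
  define S where "S j x = y j + (\<Sum>s\<in>{Suc k..L}. X j s * dyadic_diff M P s f x)" for j x
  define T where "T j = cmod (y j) + (\<Sum>s\<in>{Suc k..L}. cmod (X j s) * K s)" for j
  have "cmod (S j x) \<le> T j" for j x
    unfolding S_def T_def
    by (rule order.trans[OF norm_triangle_ineq add_left_mono[OF order.trans[OF norm_sum sum_mono]]])
      (simp add: norm_mult K mult_left_mono)
  moreover have "T j \<le> sum T {1..R}" if "j \<in> {1..R}" for j
    using that order.trans[OF norm_ge_zero K]
    by (intro member_le_sum) (auto simp: T_def intro!: sum_nonneg add_nonneg_nonneg mult_nonneg_nonneg)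
  ultimately have "cmod (S j x) \<le> sum T {1..R}" if "j \<in> {1..R}" for j x
    using that order.trans by blast
  then have "(MAX j\<in>{1..R}. cmod (S j x)) \<le> sum T {1..R}" for x
    using False by (intro Max.boundedI) auto
  moreover have "0 \<le> (MAX j\<in>{1..R}. cmod (S j x))" for x
    using False by (auto simp: Max_ge_iff intro!: bexI[of _ 1])
  ultimately show ?thesis
    unfolding tail_max_sq_def S_def[symmetric] by (blast intro: power_mono)
qed

lemma integrable_tail_max_sq: "integrable M (tail_max_sq R L X k y f)"
proof -
  obtain C where "\<And>x. tail_max_sq R L X k y f x \<le> C"
    using tail_max_sq_bounded by blast
  moreover have "tail_max_sq R L X k y f \<in> borel_measurable M"
    unfolding tail_max_sq_def[abs_def] by measurable
  ultimately show ?thesis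
    by (intro integrable_const_bound[where B=C]) (auto simp: tail_max_sq_def)
qed

lemma excess_split:
  assumes "square_integrable M f" "a \<in> P k" "a1 \<in> P (Suc k)" "a2 \<in> P (Suc k)"
    and "a1 \<inter> a2 = {}" "a1 \<union> a2 = a" "k < L"
  defines "c \<equiv> average M a1 f - average M a f"
  shows "excess R L X lam k a y f =
    (excess R L X lam (Suc k) a1 (\<lambda>j. y j + c * X j (Suc k)) f
      + excess R L X lam (Suc k) a2 (\<lambda>j. y j - c * X j (Suc k)) f) / 2 - lam * (cmod c)\<^sup>2"
proof -
  have f: "integrable M f" "integrable M (\<lambda>x. (cmod (f x))\<^sup>2)"
    by (rule square_integrableD[OF assms(1)])+
  have split: "average M a g = (average M a1 g + average M a2 g) / 2"
    if "integrable M g" for g :: "'a \<Rightarrow> 'b::{banach, second_countable_topology, real_normed_field}"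
    using assms(2-6) that
    by (intro average_split_half) (auto simp: atom_sets measure_atom measure_atom_neq_0)
  have mean: "average M a f = (average M a1 f + average M a2 f) / 2"
    by (rule split[OF f(1)])
  have "a1 \<subseteq> a" "a2 \<subseteq> a"
    using assms(6) by blast+
  have "dyadic_diff M P (Suc k) f x = c" if "x \<in> a1" for x
    unfolding c_def by (rule dyadic_diff_child[OF assms(2,3) \<open>a1 \<subseteq> a\<close> that])
  then have tail1: "average M a1 (tail_max_sq R L X k y f)
      = average M a1 (tail_max_sq R L X (Suc k) (\<lambda>j. y j + c * X j (Suc k)) f)"
    using assms(7) by (intro average_cong) (simp add: tail_max_sq_Suc mult.commute)
  have "dyadic_diff M P (Suc k) f x = - c" if "x \<in> a2" for x
  proof -
    have "dyadic_diff M P (Suc k) f x = average M a2 f - average M a f"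
      by (rule dyadic_diff_child[OF assms(2,4) \<open>a2 \<subseteq> a\<close> that])
    then show ?thesis
      unfolding c_def by (simp add: mean field_simps)
  qed
  then have tail2: "average M a2 (tail_max_sq R L X k y f)
      = average M a2 (tail_max_sq R L X (Suc k) (\<lambda>j. y j - c * X j (Suc k)) f)"
    using assms(7) by (intro average_cong) (simp add: tail_max_sq_Suc mult.commute)
  have parallelogram:
    "(cmod (average M a f))\<^sup>2 = ((cmod (average M a1 f))\<^sup>2 + (cmod (average M a2 f))\<^sup>2) / 2 - (cmod c)\<^sup>2"
    unfolding c_def mean by (rule cmod_midpoint_power2)
  show ?thesis
    unfolding excess_def split[OF integrable_tail_max_sq] split[OF f(2)] tail1 tail2 parallelogram
    by (simp add: algebra_simps add_divide_distrib diff_divide_distrib)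
qed

lemma excess_add_const:
  assumes "square_integrable M f" "square_integrable M g" "b \<in> P k" "\<And>x. x \<in> b \<Longrightarrow> g x = f x + c"
  shows "excess R L X lam k b y g = excess R L X lam k b y f"
proof -
  have f: "integrable M f" "integrable M (\<lambda>x. (cmod (f x))\<^sup>2)"
    by (rule square_integrableD[OF assms(1)])+
  have b: "b \<in> sets M" "measure M b \<noteq> 0"
    using assms(3) by (simp_all add: atom_sets measure_atom_neq_0)
  have "dyadic_diff M P s g x = dyadic_diff M P s f x" if "x \<in> b" "Suc k \<le> s" for x s
    using dyadic_cond_exp_add_const[OF f(1) assms(3,4), of s x]
      dyadic_cond_exp_add_const[OF f(1) assms(3,4), of "s - 1" x] that
    by (simp add: dyadic_diff_def)
  then have tail: "average M b (tail_max_sq R L X k y g) = average M b (tail_max_sq R L X k y f)"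
    by (intro average_cong) (simp add: tail_max_sq_def)
  have "average M b (\<lambda>x. (cmod (g x))\<^sup>2) = average M b (\<lambda>x. (cmod (f x + c))\<^sup>2)"
    using assms(4) by (intro average_cong) simp
  also have "\<dots> = average M b (\<lambda>x. (cmod (f x))\<^sup>2) + 2 * Re (cnj c * average M b f) + (cmod c)\<^sup>2"
    by (rule average_norm_sq_add_const[OF f b])
  finally have norm: "average M b (\<lambda>x. (cmod (g x))\<^sup>2)
      = average M b (\<lambda>x. (cmod (f x))\<^sup>2) + 2 * Re (cnj c * average M b f) + (cmod c)\<^sup>2" .
  have "average M b g = average M b (\<lambda>x. f x + c)"
    using assms(4) by (rule average_cong)
  also have "\<dots> = average M b f + c"
    using f(1) b by (simp add: average_add average_const)
  finally have mean: "average M b g = average M b f + c" .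
  show ?thesis
    unfolding excess_def tail norm mean cmod_add_power2 by simp
qed

lemma excess_le_bellman:
  assumes "0 \<le> lam" "square_integrable M f" "k \<le> L" "a \<in> P k"
  shows "ereal (excess R L X lam k a y f) \<le> bellman R lam (column_list X k L) y"
  using assms(3,4)
proof (induction k arbitrary: a y rule: inc_induct)
  case base
  have "average M a (tail_max_sq R L X L y f) = (MAX j\<in>{1..R}. cmod (y j))\<^sup>2"
    using base by (simp add: tail_max_sq_self average_const atom_sets measure_atom_neq_0)
  moreover have "(cmod (average M a f))\<^sup>2 \<le> average M a (\<lambda>x. (cmod (f x))\<^sup>2)"
    using base square_integrableD[OF assms(2)]
    by (intro norm_average_sq_le) (simp_all add: atom_sets measure_atom_neq_0)
  ultimately show ?case
    using assms(1) by (simp add: excess_def column_list_Nil)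
next
  case (step n)
  obtain a1 a2 where a12: "a1 \<in> P (Suc n)" "a2 \<in> P (Suc n)" "a1 \<inter> a2 = {}" "a1 \<union> a2 = a"
    using atom_split[OF step.prems] .
  define c where "c = average M a1 f - average M a f"
  have "ereal (excess R L X lam n a y f) = ereal
      ((excess R L X lam (Suc n) a1 (\<lambda>j. y j + c * X j (Suc n)) f
        + excess R L X lam (Suc n) a2 (\<lambda>j. y j - c * X j (Suc n)) f) / 2 - lam * (cmod c)\<^sup>2)"
    unfolding c_def using excess_split[OF assms(2) step.prems a12 step.hyps(2)] by simp
  also have "\<dots> \<le> (bellman R lam (column_list X (Suc n) L) (\<lambda>j. y j + c * X j (Suc n))
      + bellman R lam (column_list X (Suc n) L) (\<lambda>j. y j - c * X j (Suc n))) / 2 - ereal (lam * (cmod c)\<^sup>2)"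
    by (intro ereal_half_sum_diff_mono step.IH a12)
  also have "\<dots> \<le> bellman R lam (column_list X n L) y"
    unfolding column_list_Cons[OF step.hyps(2)] bellman.simps by (rule SUP_upper2[where i=c]) simp_all
  finally show ?case .
qed

definition centered_on :: "'a set \<Rightarrow> ('a \<Rightarrow> complex) \<Rightarrow> bool" where
  "centered_on a f \<longleftrightarrow> f \<in> borel_measurable M \<and> (\<exists>K. \<forall>x. cmod (f x) \<le> K)
    \<and> (\<forall>x. x \<notin> a \<longrightarrow> f x = 0) \<and> average M a f = 0"

lemma centered_on_square_integrable:
  assumes "centered_on a f"
  shows "square_integrable M f"
proof -
  obtain K where "f \<in> borel_measurable M" "\<And>x. cmod (f x) \<le> K"
    using assms unfolding centered_on_def by blast
  then show ?thesis
    by (rule square_integrable_if_bounded)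
qed

lemma centered_on_0: "a \<in> P k \<Longrightarrow> centered_on a (\<lambda>_. 0)"
  by (auto simp: centered_on_def average_const atom_sets measure_atom_neq_0)

(* Since f1 and f2 have mean zero on a1 and a2, the difference at the next level of glue is c on a1
   and -c on a2. *)
definition glue :: "'a set \<Rightarrow> 'a set \<Rightarrow> complex \<Rightarrow> ('a \<Rightarrow> complex) \<Rightarrow> ('a \<Rightarrow> complex) \<Rightarrow> 'a \<Rightarrow> complex"
  where "glue a1 a2 c f1 f2 x = f1 x + f2 x + c * (indicator a1 x - indicator a2 x)"

lemma glue_eq:
  assumes "a1 \<inter> a2 = {}" "centered_on a1 f1" "centered_on a2 f2"
  shows "x \<in> a1 \<Longrightarrow> glue a1 a2 c f1 f2 x = f1 x + c"
    and "x \<in> a2 \<Longrightarrow> glue a1 a2 c f1 f2 x = f2 x + - c"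
    and "x \<notin> a1 \<union> a2 \<Longrightarrow> glue a1 a2 c f1 f2 x = 0"
  using assms by (auto simp: glue_def centered_on_def split: split_indicator)

lemma average_glue:
  assumes "a1 \<in> P k" "a2 \<in> P k" "a1 \<inter> a2 = {}" "centered_on a1 f1" "centered_on a2 f2"
  shows "average M a1 (glue a1 a2 c f1 f2) = c" "average M a2 (glue a1 a2 c f1 f2) = - c"
proof -
  have f: "integrable M f1" "integrable M f2"
    using square_integrableD(1)[OF centered_on_square_integrable] assms(4,5) by blast+
  have "average M a1 f1 = 0" "average M a2 f2 = 0"
    using assms(4,5) by (simp_all add: centered_on_def)
  have "average M a1 (glue a1 a2 c f1 f2) = average M a1 (\<lambda>x. f1 x + c)"
    using glue_eq(1)[OF assms(3-5)] by (rule average_cong)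
  then show "average M a1 (glue a1 a2 c f1 f2) = c"
    using f(1) \<open>average M a1 f1 = 0\<close> atom_sets[OF assms(1)] measure_atom_neq_0[OF assms(1)]
    by (simp add: average_add average_const)
  have "average M a2 (glue a1 a2 c f1 f2) = average M a2 (\<lambda>x. f2 x + - c)"
    using glue_eq(2)[OF assms(3-5)] by (rule average_cong)
  then show "average M a2 (glue a1 a2 c f1 f2) = - c"
    using \<open>average M a2 f2 = 0\<close> average_add[OF f(2) _ atom_sets[OF assms(2)], of "\<lambda>_. - c"]
      average_const[OF atom_sets[OF assms(2)] measure_atom_neq_0[OF assms(2)]]
    by simp
qed

lemma centered_on_glue:
  assumes "a \<in> P k" "a1 \<in> P (Suc k)" "a2 \<in> P (Suc k)" "a1 \<inter> a2 = {}" "a1 \<union> a2 = a"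
    and "centered_on a1 f1" "centered_on a2 f2"
  shows "centered_on a (glue a1 a2 c f1 f2)"
proof -
  obtain K1 K2 where K: "\<And>x. cmod (f1 x) \<le> K1" "\<And>x. cmod (f2 x) \<le> K2"
    using assms(6,7) unfolding centered_on_def by blast
  have [measurable]: "f1 \<in> borel_measurable M" "f2 \<in> borel_measurable M" "a1 \<in> sets M" "a2 \<in> sets M"
    using assms(2,3,6,7) by (simp_all add: centered_on_def atom_sets)
  have meas: "glue a1 a2 c f1 f2 \<in> borel_measurable M"
    unfolding glue_def[abs_def] by measurable
  have bound: "cmod (glue a1 a2 c f1 f2 x) \<le> K1 + K2 + 2 * cmod c" for x
  proof -
    have "cmod (c * (indicator a1 x - indicator a2 x)) \<le> 2 * cmod c"
      by (auto simp: indicator_def norm_mult)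
    then show ?thesis
      unfolding glue_def using K[of x] norm_triangle_ineq[of "f1 x + f2 x" "c * (indicator a1 x - indicator a2 x)"]
        norm_triangle_ineq[of "f1 x" "f2 x"]
      by linarith
  qed
  have "average M a (glue a1 a2 c f1 f2) = 0"
    using average_split_half[OF assms(5)[symmetric] assms(4) atom_sets[OF assms(2)] atom_sets[OF assms(3)] _ _
        measure_atom_neq_0[OF assms(1)] square_integrableD(1)[OF square_integrable_if_bounded[OF meas bound]]]
      average_glue[OF assms(2-4,6,7)] assms(1-3) by (simp add: measure_atom)
  then show ?thesis
    unfolding centered_on_def using meas bound glue_eq(3)[OF assms(4,6,7)] assms(5) by blast
qed

lemma excess_glue:
  assumes "a \<in> P k" "a1 \<in> P (Suc k)" "a2 \<in> P (Suc k)" "a1 \<inter> a2 = {}" "a1 \<union> a2 = a" "k < L"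
    and "centered_on a1 f1" "centered_on a2 f2"
  shows "excess R L X lam k a y (glue a1 a2 c f1 f2) =
      (excess R L X lam (Suc k) a1 (\<lambda>j. y j + c * X j (Suc k)) f1
        + excess R L X lam (Suc k) a2 (\<lambda>j. y j - c * X j (Suc k)) f2) / 2 - lam * (cmod c)\<^sup>2"
proof -
  have sq: "square_integrable M (glue a1 a2 c f1 f2)" "square_integrable M f1" "square_integrable M f2"
    using centered_on_glue[OF assms(1-5,7,8)] assms(7,8) centered_on_square_integrable by blast+
  have "average M a (glue a1 a2 c f1 f2) = 0"
    using centered_on_glue[OF assms(1-5,7,8)] by (simp add: centered_on_def)
  then show ?thesis
    using excess_split[OF sq(1) assms(1-6)] average_glue[OF assms(2-4,7,8)]
      excess_add_const[OF sq(2,1) assms(2) glue_eq(1)[OF assms(4,7,8)]]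
      excess_add_const[OF sq(3,1) assms(3) glue_eq(2)[OF assms(4,7,8)]]
    by simp
qed

lemma exists_excess_gt:
  assumes "k \<le> L" "a \<in> P k" "ereal t < bellman R lam (column_list X k L) y"
  shows "\<exists>f. centered_on a f \<and> t < excess R L X lam k a y f"
  using assms
proof (induction k arbitrary: a y t rule: inc_induct)
  case base
  then have "t < excess R L X lam L a y (\<lambda>_. 0)"
    by (simp add: excess_def column_list_Nil tail_max_sq_self average_const atom_sets measure_atom_neq_0)
  then show ?case
    using centered_on_0[OF base(1)] by blast
next
  case (step n)
  obtain a1 a2 where a12: "a1 \<in> P (Suc n)" "a2 \<in> P (Suc n)" "a1 \<inter> a2 = {}" "a1 \<union> a2 = a"
    using atom_split[OF step.prems(1)] .
  let ?W = "bellman R lam (column_list X (Suc n) L)"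
  have "ereal t < (SUP c. (?W (\<lambda>j. y j + c * X j (Suc n)) + ?W (\<lambda>j. y j - c * X j (Suc n))) / 2
      - ereal (lam * (cmod c)\<^sup>2))"
    using step.prems(2) unfolding column_list_Cons[OF step.hyps(2)] by simp
  then obtain c where "ereal t < (?W (\<lambda>j. y j + c * X j (Suc n)) + ?W (\<lambda>j. y j - c * X j (Suc n))) / 2
      - ereal (lam * (cmod c)\<^sup>2)"
    by (auto simp: less_SUP_iff)
  then obtain t1 t2 where t12: "ereal t1 < ?W (\<lambda>j. y j + c * X j (Suc n))"
    "ereal t2 < ?W (\<lambda>j. y j - c * X j (Suc n))" "t < (t1 + t2) / 2 - lam * (cmod c)\<^sup>2"
    by (rule ereal_less_half_sum_diff[OF _ bellman_nonneg bellman_nonneg])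
  obtain f1 f2 where f1: "centered_on a1 f1" "t1 < excess R L X lam (Suc n) a1 (\<lambda>j. y j + c * X j (Suc n)) f1"
    and f2: "centered_on a2 f2" "t2 < excess R L X lam (Suc n) a2 (\<lambda>j. y j - c * X j (Suc n)) f2"
    using step.IH[OF a12(1) t12(1)] step.IH[OF a12(2) t12(2)] by blast
  have "t < excess R L X lam n a y (glue a1 a2 c f1 f2)"
    using excess_glue[OF step.prems(1) a12 step.hyps(2) f1(1) f2(1), where R=R and X=X and lam=lam and y=y and c=c]
      t12(3) f1(2) f2(2)
    by (simp add: field_simps)
  then show ?case
    using centered_on_glue[OF step.prems(1) a12 f1(1) f2(1)] by blast
qed

lemma excess_space:
  assumes "square_integrable M f"
  shows "excess R L X lam 0 (space M) y f = expectation (tail_max_sq R L X 0 y f)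
    - lam * (expectation (\<lambda>x. (cmod (f x))\<^sup>2) - (cmod (expectation f))\<^sup>2)"
  using square_integrableD[OF assms]
  by (simp add: excess_def average_space integrable_tail_max_sq)

lemma tail_max_sq_bound_iff_bellman:
  assumes "0 \<le> lam"
  shows "(\<forall>f. square_integrable M f \<longrightarrow>
      expectation (tail_max_sq R L X 0 (\<lambda>_. 0) f) \<le> lam * expectation (\<lambda>x. (cmod (f x))\<^sup>2))
    \<longleftrightarrow> bellman R lam (column_list X 0 L) (\<lambda>_. 0) \<le> 0"
proof
  assume bound: "\<forall>f. square_integrable M f \<longrightarrow>
    expectation (tail_max_sq R L X 0 (\<lambda>_. 0) f) \<le> lam * expectation (\<lambda>x. (cmod (f x))\<^sup>2)"
  show "bellman R lam (column_list X 0 L) (\<lambda>_. 0) \<le> 0"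
  proof (rule ccontr)
    assume "\<not> ?thesis"
    then have "ereal 0 < bellman R lam (column_list X 0 L) (\<lambda>_. 0)"
      by (simp add: zero_ereal_def not_le)
    then obtain f where f: "centered_on (space M) f" "0 < excess R L X lam 0 (space M) (\<lambda>_. 0) f"
      using exists_excess_gt[of 0 L "space M"] atoms_0 by blast
    have sq: "square_integrable M f"
      using f(1) by (rule centered_on_square_integrable)
    then have "expectation f = 0"
      using f(1) average_space[OF square_integrableD(1)[OF sq]] by (simp add: centered_on_def)
    then show False
      using f(2) bound[rule_format, OF sq] by (simp add: excess_space[OF sq])
  qed
next
  assume bellman: "bellman R lam (column_list X 0 L) (\<lambda>_. 0) \<le> 0"
  show "\<forall>f. square_integrable M f \<longrightarrow>
      expectation (tail_max_sq R L X 0 (\<lambda>_. 0) f) \<le> lam * expectation (\<lambda>x. (cmod (f x))\<^sup>2)"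
  proof (intro allI impI)
    fix f assume sq: "square_integrable M f"
    have "ereal (excess R L X lam 0 (space M) (\<lambda>_. 0) f) \<le> 0"
      using order_trans[OF excess_le_bellman[OF assms sq, of 0 L "space M"] bellman] atoms_0 by simp
    moreover have "0 \<le> lam * (cmod (expectation f))\<^sup>2"
      using assms by simp
    ultimately show "expectation (tail_max_sq R L X 0 (\<lambda>_. 0) f) \<le> lam * expectation (\<lambda>x. (cmod (f x))\<^sup>2)"
      by (simp add: excess_space[OF sq] zero_ereal_def algebra_simps)
  qed
qed

lemma L2norm_bound_iff:
  assumes "0 \<le> c"
  shows "L2norm M (\<lambda>x. MAX j\<in>{1..R}. cmod (\<Sum>k=1..L. X j k * dyadic_diff M P k f x)) \<le> c * L2norm M f
    \<longleftrightarrow> expectation (tail_max_sq R L X 0 (\<lambda>_. 0) f) \<le> c\<^sup>2 * expectation (\<lambda>x. (cmod (f x))\<^sup>2)"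
proof -
  have "(\<lambda>x. (cmod (complex_of_real (MAX j\<in>{1..R}. cmod (\<Sum>k=1..L. X j k * dyadic_diff M P k f x))))\<^sup>2)
      = tail_max_sq R L X 0 (\<lambda>_. 0) f"
    by (simp add: tail_max_sq_def fun_eq_iff)
  moreover have "c * sqrt (expectation (\<lambda>x. (cmod (f x))\<^sup>2)) = sqrt (c\<^sup>2 * expectation (\<lambda>x. (cmod (f x))\<^sup>2))"
    using assms by (simp add: real_sqrt_mult)
  moreover have "0 \<le> expectation (tail_max_sq R L X 0 (\<lambda>_. 0) f)"
    by (rule integral_nonneg_AE) (simp add: tail_max_sq_def)
  ultimately show ?thesis
    by (simp add: L2norm_def)
qed

lemma hconst_eq_Inf_bellman:
  "hconst M P R L X = Inf {c. 0 \<le> c \<and> bellman R (c\<^sup>2) (column_list X 0 L) (\<lambda>_. 0) \<le> 0}"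
  unfolding hconst_def
proof (intro arg_cong[where f=Inf] Collect_cong)
  fix c :: real
  show "(0 \<le> c \<and> (\<forall>f. f \<in> borel_measurable M \<and> integrable M (\<lambda>x. (cmod (f x))\<^sup>2) \<longrightarrow>
        L2norm M (\<lambda>x. MAX j\<in>{1..R}. cmod (\<Sum>k=1..L. X j k * dyadic_diff M P k f x)) \<le> c * L2norm M f))
    \<longleftrightarrow> (0 \<le> c \<and> bellman R (c\<^sup>2) (column_list X 0 L) (\<lambda>_. 0) \<le> 0)"
    using L2norm_bound_iff[of c] tail_max_sq_bound_iff_bellman[of "c\<^sup>2" R L X]
    by (auto simp: square_integrable_def)
qed

end

lemma strict_mono_on_image_atLeastAtMost:
  fixes f :: "nat \<Rightarrow> nat"
  assumes "strict_mono_on {1..n} f" "1 \<le> f 1" "f n \<le> m"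
  shows "f ` {1..n} \<subseteq> {1..m}"
proof
  fix x assume "x \<in> f ` {1..n}"
  then obtain r where "r \<in> {1..n}" "x = f r" by blast
  then show "x \<in> {1..m}"
    using strict_mono_on_leD[OF assms(1), of 1 r] strict_mono_on_leD[OF assms(1), of r n] assms(2,3) by auto
qed

theorem lemma2p4:
  fixes Mp :: "'a measure" and P :: "nat \<Rightarrow> 'a set set"
    and A B :: "nat \<Rightarrow> nat \<Rightarrow> complex" and M N M1 N1 :: nat and ms ns :: "nat \<Rightarrow> nat"
  assumes "prob_space Mp" and "dyadic_filtration Mp P"
    and "M \<ge> 1" and "N \<ge> 1"
    and "strict_mono_on {1..M} ms" and "strict_mono_on {1..N} ns"
    and "ms 1 \<ge> 1" and "ns 1 \<ge> 1"
    and "M1 \<ge> ms M" and "N1 \<ge> ns N"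
    and "\<forall>r\<in>{1..M}. \<forall>s\<in>{1..N}. B (ms r) (ns s) = A r s"
    and "\<forall>j k. j \<notin> ms ` {1..M} \<or> k \<notin> ns ` {1..N} \<longrightarrow> B j k = 0"
  shows "hconst Mp P M N A = hconst Mp P M1 N1 B"
proof -
  interpret dyadic_prob_space Mp P
    using assms(1,2) by (simp add: dyadic_prob_space_def dyadic_prob_space_axioms_def)
  have "bellman M1 (c\<^sup>2) (column_list B 0 N1) (\<lambda>_. 0) = bellman M (c\<^sup>2) (column_list A 0 N) (\<lambda>_. 0)" for c
  proof (rule bellman_column_list_spread)
    show "inj_on ms {1..M}"
      using assms(5) by (rule strict_mono_on_imp_inj_on)
    show "ms ` {1..M} \<subseteq> {1..M1}"
      using assms(5,7,9) by (rule strict_mono_on_image_atLeastAtMost)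
    show "ns ` {1..N} \<subseteq> {1..N1}"
      using assms(6,8,10) by (rule strict_mono_on_image_atLeastAtMost)
  qed (use assms in auto)
  then show ?thesis
    by (simp add: hconst_eq_Inf_bellman)
qed

end
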